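(* Consider the planar optimal control problem of minimizing $J=-m(t_f)$ over the thrust parameters $T_1,T_2$, the free final time $t_f$ and the measurable unit thrust direction $\vec u(t)$, subject to $$\dot{\vec r}=\vec v,\qquad \dot{\vec v}=-\frac{\mu}{r^3}\vec r+\frac{T(t)}{m}\vec u,\qquad \dot m=-\frac{T(t)}{v_e},$$ with fixed initial state $(\vec r_0,\vec v_0,m_0)$ at $t_0$ and final constraints $w(t_f)=w_f$, $h(t_f)=h_f$, where the thrust follows the linear model $T(t)=T_1+(t-t_0)T_2$ and is assumed strictly positive on $[t_0,t_f]$. Let $(\vec p_r,\vec p_v,p_m,p_0)$ be costates and multiplier satisfying the Pontryagin conditions listed in the context, in particular the parameter stationarity conditions $$\int_{t_0}^{t_f}\frac{\partial T}{\partial T_1}\,\Phi\,dt=0,\qquad \int_{t_0}^{t_f}\frac{\partial T}{\partial T_2}\,\Phi\,dt=0,\qquad \Phi:=\frac{p_v}{m}-\frac{p_m}{v_e},\ p_v=\|\vec p_v\|.$$ Then, with $\Psi:=m\,p_m$, one has $\Psi(t_f)=\Psi(t_0)$, i.e. $$p_m(t_0)\,m(t_0)=-p_0\,m(t_f).$$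
   Context: Planar (two-dimensional) motion in an Earth-centered inertial frame; $\vec r,\vec v,m$ are position, velocity, mass; $r=\|\vec r\|$; $\mu>0$ is the gravitational constant; $v_e>0$ the exhaust velocity; $\vec u$ a unit vector. Energy per unit mass $w=\tfrac{v^2}{2}-\tfrac{\mu}{r}$, angular momentum $\vec h=\vec r\times\vec v$, $h=\|\vec h\|$. Hamiltonian $H=\vec p_r^{\,t}\vec v+\vec p_v^{\,t}\big(-\tfrac{\mu}{r^3}\vec r+\tfrac{T}{m}\vec u\big)-p_m\tfrac{T}{v_e}$. Pontryagin conditions: maximization gives $\vec u=\vec p_v/p_v$ so that $H=H_0+T\Phi$ with $H_0=\vec p_r^{\,t}\vec v+\vec p_v^{\,t}\vec g$; costate equations $\dot{\vec p}_r=-\tfrac{\partial \vec g}{\partial\vec r}\vec p_v$, $\dot{\vec p}_v=-\vec p_r$, $\dot p_m=\tfrac{T}{m^2}p_v$; transversality on mass $p_m(t_f)=-p_0$ with $p_0\le 0$ a normalization multiplier; $H\equiv 0$. *)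

theory Defs
  imports "HOL-Analysis.Analysis"
begin

definition grav :: "real \<Rightarrow> real^2 \<Rightarrow> real^2" where
  "grav mu r = - (mu / norm r ^ 3) *\<^sub>R r"

definition energy :: "real \<Rightarrow> real^2 \<Rightarrow> real^2 \<Rightarrow> real" where
  "energy mu r v = norm v ^ 2 / 2 - mu / norm r"

definition ang_mom :: "real^2 \<Rightarrow> real^2 \<Rightarrow> real" where
  "ang_mom r v = \<bar>r $ 1 * v $ 2 - r $ 2 * v $ 1\<bar>"

text \<open>-(dg/dr)^t p_v, where g = -mu r/|r|^3; the Jacobian is symmetric:
  dg/dr = -mu/|r|^3 I + 3 mu r r^t/|r|^5.\<close>
definition grav_jac_T :: "real \<Rightarrow> real^2 \<Rightarrow> real^2 \<Rightarrow> real^2" where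
  "grav_jac_T mu r p = - (mu / norm r ^ 3) *\<^sub>R p + (3 * mu * (r \<bullet> p) / norm r ^ 5) *\<^sub>R r"

end

theory Submission
  imports Defs
begin

text \<open>Along the mass and mass-costate equations, \<open>\<Psi> = m p\<^sub>m\<close> has derivative \<open>T \<Phi>\<close>.
  Since the thrust is affine in the parameters \<open>T\<^sub>1, T\<^sub>2\<close>, \<open>T \<Phi>\<close> is a linear combination
  of the two stationarity integrands, so its integral over \<open>[t\<^sub>0, t\<^sub>f]\<close> vanishes and
  \<open>\<Psi>(t\<^sub>f) = \<Psi>(t\<^sub>0)\<close>; the transversality condition \<open>p\<^sub>m(t\<^sub>f) = -p\<^sub>0\<close> then gives the result.\<close>

lemma mass_times_costate_derivative:
  fixes m pm :: "real \<Rightarrow> real"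
  assumes "m t \<noteq> 0"
    and "(m has_real_derivative (- T / ve)) (at t within S)"
    and "(pm has_real_derivative (T / (m t)\<^sup>2 * p)) (at t within S)"
  shows "((\<lambda>t. m t * pm t) has_real_derivative (T * (p / m t - pm t / ve))) (at t within S)"
proof -
  have "((\<lambda>t. m t * pm t) has_real_derivative
          (m t * (T / (m t)\<^sup>2 * p) + (- T / ve) * pm t)) (at t within S)"
    using DERIV_mult[OF assms(2,3)] by (simp add: mult.commute)
  moreover have "m t * (T / (m t)\<^sup>2 * p) + (- T / ve) * pm t = T * (p / m t - pm t / ve)"
    using assms(1) by (simp add: field_simps power2_eq_square)
  ultimately show ?thesis by simp
qed

lemma has_integral_affine_weight_zero:
  fixes f :: "real \<Rightarrow> real"
  assumes "(f has_integral 0) S" and "((\<lambda>t. (t - a) * f t) has_integral 0) S"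
  shows "((\<lambda>t. (c + (t - a) * d) * f t) has_integral 0) S"
proof -
  have "((\<lambda>t. c * f t + d * ((t - a) * f t)) has_integral 0) S"
    using has_integral_add[OF has_integral_mult_right[OF assms(1)]
                               has_integral_mult_right[OF assms(2)]] by simp
  then show ?thesis by (simp add: algebra_simps)
qed

lemma endpoint_values_eq_if_derivative_integral_zero:
  fixes F f :: "real \<Rightarrow> real"
  assumes "a \<le> b"
    and "\<And>t. t \<in> {a..b} \<Longrightarrow> (F has_real_derivative f t) (at t within {a..b})"
    and "(f has_integral 0) {a..b}"
  shows "F b = F a"
proof -
  have "(f has_integral (F b - F a)) {a..b}"
    using assms(1,2) by (intro fundamental_theorem_of_calculus)
      (auto simp: has_real_derivative_iff_has_vector_derivative)
  then have "F b - F a = 0"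
    using assms(3) by (rule has_integral_unique)
  then show ?thesis by simp
qed

theorem mainTheorem1:
  fixes mu ve t0 tf T1 T2 p0 wf hf m0 :: real
    and r0 v0 :: "real^2"
    and r v u pr pv :: "real \<Rightarrow> real^2"
    and m pm Thr :: "real \<Rightarrow> real"
  assumes mu_pos: "mu > 0" and ve_pos: "ve > 0"
    and times: "t0 < tf"
    and thrust: "\<And>t. Thr t = T1 + (t - t0) * T2"
    and thrust_pos: "\<And>t. t \<in> {t0..tf} \<Longrightarrow> Thr t > 0"
    and u_meas: "u measurable_on {t0..tf}"
    and u_unit: "\<And>t. t \<in> {t0..tf} \<Longrightarrow> norm (u t) = 1"
    and r_nz: "\<And>t. t \<in> {t0..tf} \<Longrightarrow> r t \<noteq> 0"
    and m_pos: "\<And>t. t \<in> {t0..tf} \<Longrightarrow> m t > 0"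
    and dr: "\<And>t. t \<in> {t0..tf} \<Longrightarrow> (r has_vector_derivative v t) (at t within {t0..tf})"
    and dv: "\<And>t. t \<in> {t0..tf} \<Longrightarrow>
              (v has_vector_derivative (grav mu (r t) + (Thr t / m t) *\<^sub>R u t)) (at t within {t0..tf})"
    and dm: "\<And>t. t \<in> {t0..tf} \<Longrightarrow> (m has_real_derivative (- Thr t / ve)) (at t within {t0..tf})"
    and init: "r t0 = r0" "v t0 = v0" "m t0 = m0"
    and final: "energy mu (r tf) (v tf) = wf" "ang_mom (r tf) (v tf) = hf"
    and u_max: "\<And>t. t \<in> {t0..tf} \<Longrightarrow> pv t \<noteq> 0 \<Longrightarrow> u t = (1 / norm (pv t)) *\<^sub>R pv t"
    and dpr: "\<And>t. t \<in> {t0..tf} \<Longrightarrow>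
              (pr has_vector_derivative (- grav_jac_T mu (r t) (pv t))) (at t within {t0..tf})"
    and dpv: "\<And>t. t \<in> {t0..tf} \<Longrightarrow> (pv has_vector_derivative (- pr t)) (at t within {t0..tf})"
    and dpm: "\<And>t. t \<in> {t0..tf} \<Longrightarrow>
              (pm has_real_derivative (Thr t / (m t)\<^sup>2 * norm (pv t))) (at t within {t0..tf})"
    and p0_nonpos: "p0 \<le> 0"
    and transv: "pm tf = - p0"
    and H_zero: "\<And>t. t \<in> {t0..tf} \<Longrightarrow>
              pr t \<bullet> v t + pv t \<bullet> (grav mu (r t) + (Thr t / m t) *\<^sub>R u t) - pm t * Thr t / ve = 0"
    and stat1: "((\<lambda>t. 1 * (norm (pv t) / m t - pm t / ve)) has_integral 0) {t0..tf}"
    and stat2: "((\<lambda>t. (t - t0) * (norm (pv t) / m t - pm t / ve)) has_integral 0) {t0..tf}"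
  shows "m tf * pm tf = m t0 * pm t0 \<and> pm t0 * m t0 = - p0 * m tf"
proof -
  define \<Phi> where "\<Phi> t = norm (pv t) / m t - pm t / ve" for t
  have "(\<Phi> has_integral 0) {t0..tf}" and "((\<lambda>t. (t - t0) * \<Phi> t) has_integral 0) {t0..tf}"
    using stat1 stat2 by (simp_all add: \<Phi>_def[abs_def])
  then have "((\<lambda>t. Thr t * \<Phi> t) has_integral 0) {t0..tf}"
    unfolding thrust by (rule has_integral_affine_weight_zero)
  moreover have "((\<lambda>t. m t * pm t) has_real_derivative Thr t * \<Phi> t) (at t within {t0..tf})"
    if "t \<in> {t0..tf}" for t
    unfolding \<Phi>_def using m_pos[OF that] dm[OF that] dpm[OF that]
    by (intro mass_times_costate_derivative) simp_all
  ultimately have "m tf * pm tf = m t0 * pm t0"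
    using times by (intro endpoint_values_eq_if_derivative_integral_zero) simp_all
  then show ?thesis using transv by (simp add: mult.commute)
qed

end
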